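(* Let $L, H \in \mathcal{L}$, $\gamma \in Z^1(L,T)$, $\sigma \in Z^1(H,T)$ and $g \in S$. Then $C_L(\gamma)^g \leq C_H(\sigma)$ if and only if $L^g \leq H$ and $\sigma^g_L - \gamma = \zeta_{L,H,g}$ (as maps $L \to T$).
   Context: Conventions: for a group $G$ acting on the right on an additive abelian group $M$, $Z^n(G,M)$, $B^n(G,M)$ are normalised cocycles and coboundaries; for $\tau \in Z^2(G,M)$, $\mathrm{Ext}(\tau)$ is $G\times M$ with $(g,m)(h,n) = (gh, m^h+n+\tau(g,h))$. Setting: $S$ is an infinite pro-$p$-group of finite coclass, $T = \gamma_\ell(S)$ ($\ell$ large) with $T \cong \mathbb{Z}_p^d$, $P = S/T$ a finite $p$-group, the series $T_0=T$, $T_{i+1} = [T_i,S]$ having all indices $p$. $T$ is an additive $P$-module via conjugation, $S = \mathrm{Ext}(\rho)$ for some $\rho \in Z^2(P,T)$, $\epsilon: S\to P$ the projection, $T$ identified with $\{(1,t)\}$; elements of $S$ act on $P$ and $T$ through their image in $P$, and $L^g$ denotes conjugation by $\epsilon(g)$. For $L \leq P$, $\overline{L} = \epsilon^{-1}(L)$. $\mathcal{L}$ is the set of elementary abelian $L \leq P$ with $\rho_L \in B^2(L,T)$. For $L \in \mathcal{L}$ a complement $C_L = \{c_L(l)\}$ to $T$ in $\overline{L}$ is fixed, $c_L(l) = (l,t_L(l))$, and for $\delta \in Z^1(L,T)$, $C_L(\delta) = \{(l,t_L(l)+\delta(l)) \mid l\in L\}$. For $L,H\in\mathcal{L}$ and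 $g \in S$ with $L^g \leq H$ define $\zeta_{L,H,g}: L \to S$, $l \mapsto (c_H(l^g)^{-1})^{g^{-1}} \cdot c_L(l)$, and for $\sigma \in Z^1(H,T)$ define $\sigma^g_L : L \to T$, $l \mapsto \sigma(l^g)^{g^{-1}}$ (an element of $Z^1(L,T)$). Equalities of maps into $T$ with maps into $S$ use the identification $t \leftrightarrow (1,t)$. *)

theory Defs
  imports "HOL-Algebra.Algebra"
begin

text \<open>An additive abelian group (the type 'b) with a right action of the group P:
  act m g stands for m^g.\<close>
definition right_action :: "('a,'c) monoid_scheme \<Rightarrow> ('b::ab_group_add \<Rightarrow> 'a \<Rightarrow> 'b) \<Rightarrow> bool" where
  "right_action P act \<longleftrightarrow>
     (\<forall>m. act m \<one>\<^bsub>P\<^esub> = m) \<and>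
     (\<forall>m g h. g \<in> carrier P \<longrightarrow> h \<in> carrier P \<longrightarrow> act (act m g) h = act m (g \<otimes>\<^bsub>P\<^esub> h)) \<and>
     (\<forall>m n g. g \<in> carrier P \<longrightarrow> act (m + n) g = act m g + act n g)"

definition Z2 :: "('a,'c) monoid_scheme \<Rightarrow> ('b::ab_group_add \<Rightarrow> 'a \<Rightarrow> 'b) \<Rightarrow> ('a \<Rightarrow> 'a \<Rightarrow> 'b) \<Rightarrow> bool" where
  "Z2 P act \<tau> \<longleftrightarrow>
     (\<forall>g\<in>carrier P. \<tau> \<one>\<^bsub>P\<^esub> g = 0 \<and> \<tau> g \<one>\<^bsub>P\<^esub> = 0) \<and>
     (\<forall>g\<in>carrier P. \<forall>h\<in>carrier P. \<forall>k\<in>carrier P.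
        act (\<tau> g h) k + \<tau> (g \<otimes>\<^bsub>P\<^esub> h) k = \<tau> g (h \<otimes>\<^bsub>P\<^esub> k) + \<tau> h k)"

definition Z1 :: "('a,'c) monoid_scheme \<Rightarrow> ('b::ab_group_add \<Rightarrow> 'a \<Rightarrow> 'b) \<Rightarrow> 'a set \<Rightarrow> ('a \<Rightarrow> 'b) \<Rightarrow> bool" where
  "Z1 P act L \<delta> \<longleftrightarrow> (\<forall>l\<in>L. \<forall>h\<in>L. \<delta> (l \<otimes>\<^bsub>P\<^esub> h) = act (\<delta> l) h + \<delta> h)"

definition B2 :: "('a,'c) monoid_scheme \<Rightarrow> ('b::ab_group_add \<Rightarrow> 'a \<Rightarrow> 'b) \<Rightarrow> 'a set \<Rightarrow> ('a \<Rightarrow> 'a \<Rightarrow> 'b) \<Rightarrow> bool" where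
  "B2 P act L \<tau> \<longleftrightarrow> (\<exists>\<beta>. \<beta> \<one>\<^bsub>P\<^esub> = 0 \<and>
       (\<forall>l\<in>L. \<forall>h\<in>L. \<tau> l h = act (\<beta> l) h + \<beta> h - \<beta> (l \<otimes>\<^bsub>P\<^esub> h)))"

definition Ext :: "('a,'c) monoid_scheme \<Rightarrow> ('b::ab_group_add \<Rightarrow> 'a \<Rightarrow> 'b) \<Rightarrow> ('a \<Rightarrow> 'a \<Rightarrow> 'b) \<Rightarrow> ('a \<times> 'b) monoid" where
  "Ext P act \<tau> = \<lparr>carrier = carrier P \<times> UNIV,
      monoid.mult = (\<lambda>x y. (fst x \<otimes>\<^bsub>P\<^esub> fst y, act (snd x) (fst y) + snd y + \<tau> (fst x) (fst y))),
      one = (\<one>\<^bsub>P\<^esub>, 0)\<rparr>"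

definition elem_abelian :: "('a,'c) monoid_scheme \<Rightarrow> nat \<Rightarrow> 'a set \<Rightarrow> bool" where
  "elem_abelian P p L \<longleftrightarrow> subgroup L P \<and> (\<forall>x\<in>L. \<forall>y\<in>L. x \<otimes>\<^bsub>P\<^esub> y = y \<otimes>\<^bsub>P\<^esub> x)
      \<and> (\<forall>x\<in>L. x [^]\<^bsub>P\<^esub> p = \<one>\<^bsub>P\<^esub>)"

definition calL :: "('a,'c) monoid_scheme \<Rightarrow> ('b::ab_group_add \<Rightarrow> 'a \<Rightarrow> 'b) \<Rightarrow> ('a \<Rightarrow> 'a \<Rightarrow> 'b) \<Rightarrow> nat \<Rightarrow> 'a set set" where
  "calL P act \<rho> p = {L. elem_abelian P p L \<and> B2 P act L \<rho>}"

text \<open>C_L(\<delta>) = {(l, t_L(l) + \<delta>(l)) | l \<in> L}; the complement C_L is C_L(0).\<close>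
definition CLd :: "'a set \<Rightarrow> ('a \<Rightarrow> 'b::ab_group_add) \<Rightarrow> ('a \<Rightarrow> 'b) \<Rightarrow> ('a \<times> 'b) set" where
  "CLd L t \<delta> = {(l, t l + \<delta> l) | l. l \<in> L}"

definition conjg :: "('x,'c) monoid_scheme \<Rightarrow> 'x \<Rightarrow> 'x \<Rightarrow> 'x" where
  "conjg G x g = inv\<^bsub>G\<^esub> g \<otimes>\<^bsub>G\<^esub> x \<otimes>\<^bsub>G\<^esub> g"

text \<open>\<zeta>_{L,H,g}(l) = (c_H(l^g)^{-1})^{g^{-1}} c_L(l), where c_L(l) = (l, t_L(l)),
  and l^g is conjugation in P by \<epsilon>(g) = fst g.\<close>
definition zeta :: "('a,'c) monoid_scheme \<Rightarrow> ('b::ab_group_add \<Rightarrow> 'a \<Rightarrow> 'b) \<Rightarrow> ('a \<Rightarrow> 'a \<Rightarrow> 'b)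
     \<Rightarrow> ('a \<Rightarrow> 'b) \<Rightarrow> ('a \<Rightarrow> 'b) \<Rightarrow> ('a \<times> 'b) \<Rightarrow> 'a \<Rightarrow> ('a \<times> 'b)" where
  "zeta P act \<rho> tL tH g l =
     (let S = Ext P act \<rho>; lg = conjg P l (fst g) in
      conjg S (inv\<^bsub>S\<^esub> (lg, tH lg)) (inv\<^bsub>S\<^esub> g) \<otimes>\<^bsub>S\<^esub> (l, tL l))"

definition twist :: "('a,'c) monoid_scheme \<Rightarrow> ('b::ab_group_add \<Rightarrow> 'a \<Rightarrow> 'b) \<Rightarrow> ('a \<Rightarrow> 'b) \<Rightarrow> ('a \<times> 'b) \<Rightarrow> 'a \<Rightarrow> 'b" where
  "twist P act \<sigma> g l = act (\<sigma> (conjg P l (fst g))) (inv\<^bsub>P\<^esub> (fst g))"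

end

theory Submission
  imports Defs
begin

text \<open>Write an element of \<open>C_L(\<gamma>)\<close> as \<open>x = c_L(l) (1, \<gamma>(l))\<close>. Since \<open>\<epsilon>\<close> is a
  homomorphism, \<open>x^g \<in> C_H(\<sigma>)\<close> forces \<open>l^g \<in> H\<close>, and then says \<open>x^g = c_H(l^g) (1, \<sigma>(l^g))\<close>.
  Conjugating back by \<open>g\<^sup>-\<^sup>1\<close>, this equation can be rearranged in any group to
  \<open>(1, \<sigma>(l^g))^(g\<^sup>-\<^sup>1) (1, \<gamma>(l))\<^sup>-\<^sup>1 = (c_H(l^g)\<^sup>-\<^sup>1)^(g\<^sup>-\<^sup>1) c_L(l)\<close>; as \<open>T\<close> is normal
  with \<open>(1, t)^h = (1, t^\<epsilon>(h))\<close>, the left-hand side is \<open>(1, \<sigma>^g_L(l) - \<gamma>(l))\<close>.\<close>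

lemma (in group) conjg_closed [intro, simp]:
  "x \<in> carrier G \<Longrightarrow> g \<in> carrier G \<Longrightarrow> conjg G x g \<in> carrier G"
  by (simp add: conjg_def)

lemma (in group) conjg_mult:
  assumes "x \<in> carrier G" "y \<in> carrier G" "g \<in> carrier G"
  shows "conjg G (x \<otimes> y) g = conjg G x g \<otimes> conjg G y g"
  using assms unfolding conjg_def by (metis inv_closed m_assoc m_closed r_inv r_one)

lemma (in group) inv_conjg:
  assumes "x \<in> carrier G" "g \<in> carrier G"
  shows "inv (conjg G x g) = conjg G (inv x) g"
  using assms by (simp add: conjg_def inv_mult_group m_assoc)

lemma (in group) conjg_eq_iff:
  assumes "x \<in> carrier G" "y \<in> carrier G" "g \<in> carrier G"
  shows "conjg G x g = y \<longleftrightarrow> x = conjg G y (inv g)"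
  using assms unfolding conjg_def
  by (metis inv_closed inv_inv inv_solve_left' inv_solve_right m_assoc m_closed)

lemma (in group) conjg_mult_eq_mult_iff:
  assumes "x \<in> carrier G" "r \<in> carrier G" "c \<in> carrier G" "s \<in> carrier G" "g \<in> carrier G"
  shows "conjg G (x \<otimes> r) g = c \<otimes> s \<longleftrightarrow>
         conjg G s (inv g) \<otimes> inv r = conjg G (inv c) (inv g) \<otimes> x"
proof -
  have "conjg G (x \<otimes> r) g = c \<otimes> s \<longleftrightarrow> x \<otimes> r = conjg G c (inv g) \<otimes> conjg G s (inv g)"
    using assms conjg_eq_iff [of "x \<otimes> r"] by (simp add: conjg_mult)
  also have "\<dots> \<longleftrightarrow> inv (conjg G c (inv g)) \<otimes> x \<otimes> r = conjg G s (inv g)"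
    using assms by (simp add: inv_solve_left' m_assoc)
  also have "\<dots> \<longleftrightarrow> conjg G s (inv g) \<otimes> inv r = conjg G (inv c) (inv g) \<otimes> x"
    using assms inv_solve_right [of "conjg G (inv c) (inv g) \<otimes> x" "conjg G s (inv g)" r]
    by (simp add: inv_conjg) metis
  finally show ?thesis .
qed

lemma Ext_carrier: "carrier (Ext P act \<tau>) = carrier P \<times> UNIV"
  by (simp add: Ext_def)

lemma Ext_mult:
  "x \<otimes>\<^bsub>Ext P act \<tau>\<^esub> y = (fst x \<otimes>\<^bsub>P\<^esub> fst y, act (snd x) (fst y) + snd y + \<tau> (fst x) (fst y))"
  by (simp add: Ext_def)

lemma Ext_one: "\<one>\<^bsub>Ext P act \<tau>\<^esub> = (\<one>\<^bsub>P\<^esub>, 0)"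
  by (simp add: Ext_def)

locale group_extension = group P
  for P :: "('a, 'c) monoid_scheme" (structure) +
  fixes act :: "'b::ab_group_add \<Rightarrow> 'a \<Rightarrow> 'b" and \<tau> :: "'a \<Rightarrow> 'a \<Rightarrow> 'b"
  assumes right_action: "right_action P act"
    and cocycle: "Z2 P act \<tau>"
begin

abbreviation E :: "('a \<times> 'b) monoid" where "E \<equiv> Ext P act \<tau>"

lemma act_one [simp]: "act m \<one> = m"
  using right_action unfolding right_action_def by blast

lemma act_act: "g \<in> carrier P \<Longrightarrow> h \<in> carrier P \<Longrightarrow> act (act m g) h = act m (g \<otimes> h)"
  using right_action unfolding right_action_def by blast

lemma act_add: "g \<in> carrier P \<Longrightarrow> act (m + n) g = act m g + act n g"
  using right_action unfolding right_action_def by blast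

lemma act_zero [simp]: "g \<in> carrier P \<Longrightarrow> act 0 g = 0"
  using act_add [of g 0 0] by simp

lemma act_minus: "g \<in> carrier P \<Longrightarrow> act (- m) g = - act m g"
  using act_add [of g m "- m"] by (simp add: add_eq_0_iff)

lemma cocycle_one [simp]:
  "g \<in> carrier P \<Longrightarrow> \<tau> \<one> g = 0" "g \<in> carrier P \<Longrightarrow> \<tau> g \<one> = 0"
  using cocycle by (simp_all add: Z2_def)

lemma Ext_pair_closed [simp]: "a \<in> carrier P \<Longrightarrow> (a, m) \<in> carrier E"
  by (simp add: Ext_carrier)

lemma fst_Ext_closed [simp]: "x \<in> carrier E \<Longrightarrow> fst x \<in> carrier P"
  by (auto simp: Ext_carrier)

lemma group_Ext: "group E"
proof (rule groupI)
  fix x y z assume "x \<in> carrier E" "y \<in> carrier E" "z \<in> carrier E"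
  then obtain a m b n c k where xyz: "x = (a, m)" "y = (b, n)" "z = (c, k)"
    and abc: "a \<in> carrier P" "b \<in> carrier P" "c \<in> carrier P"
    by (auto simp: Ext_carrier)
  have "act (\<tau> a b) c + \<tau> (a \<otimes> b) c = \<tau> a (b \<otimes> c) + \<tau> b c"
    using cocycle abc unfolding Z2_def by blast
  then have "act (act m b + n + \<tau> a b) c + k + \<tau> (a \<otimes> b) c
           = act m (b \<otimes> c) + (act n c + k + \<tau> b c) + \<tau> a (b \<otimes> c)"
    using abc by (simp add: act_add act_act algebra_simps)
  then show "x \<otimes>\<^bsub>E\<^esub> y \<otimes>\<^bsub>E\<^esub> z = x \<otimes>\<^bsub>E\<^esub> (y \<otimes>\<^bsub>E\<^esub> z)"
    using abc by (simp add: xyz Ext_mult m_assoc)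
next
  fix x assume "x \<in> carrier E"
  then obtain a m where x: "x = (a, m)" and a: "a \<in> carrier P" by (auto simp: Ext_carrier)
  define k where "k = - act (m + \<tau> (inv a) a) (inv a)"
  have "act k a = - (m + \<tau> (inv a) a)"
    using a by (simp add: k_def act_minus act_act)
  then show "\<exists>y\<in>carrier E. y \<otimes>\<^bsub>E\<^esub> x = \<one>\<^bsub>E\<^esub>"
    using a by (intro bexI [of _ "(inv a, k)"]) (auto simp: x Ext_mult Ext_one)
qed (auto simp: Ext_carrier Ext_mult Ext_one)

sublocale E: group E
  by (rule group_Ext)

lemma fst_Ext_inv: "x \<in> carrier E \<Longrightarrow> fst (inv\<^bsub>E\<^esub> x) = inv (fst x)"
  using E.l_inv [of x] E.inv_closed [of x]
  by (auto simp: Ext_mult Ext_one intro!: inv_equality [symmetric] simp del: E.l_inv)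

lemma fst_Ext_conjg:
  "x \<in> carrier E \<Longrightarrow> g \<in> carrier E \<Longrightarrow> fst (conjg E x g) = conjg P (fst x) (fst g)"
  by (simp add: conjg_def Ext_mult fst_Ext_inv)

lemma Ext_mult_kernel: "y \<in> carrier E \<Longrightarrow> y \<otimes>\<^bsub>E\<^esub> (\<one>, t) = (fst y, snd y + t)"
  by (auto simp: Ext_mult)

lemma Ext_inv_kernel: "inv\<^bsub>E\<^esub> (\<one>, t) = (\<one>, - t)"
  by (rule E.inv_equality) (simp_all add: Ext_mult_kernel Ext_one)

lemma Ext_conjg_kernel:
  assumes h: "h \<in> carrier E"
  shows "conjg E (\<one>, t) h = (\<one>, act t (fst h))"
proof -
  have "(\<one>, t) \<otimes>\<^bsub>E\<^esub> h = h \<otimes>\<^bsub>E\<^esub> (\<one>, act t (fst h))"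
    using h by (auto simp: Ext_mult Ext_mult_kernel add.commute)
  then show ?thesis
    using h unfolding conjg_def
    by (metis E.inv_closed E.l_inv E.l_one E.m_assoc Ext_pair_closed one_closed)
qed

lemma kernel_twist_eq_conjg:
  "g \<in> carrier E \<Longrightarrow>
   (\<one>, twist P act \<sigma> g l) = conjg E (\<one>, \<sigma> (conjg P l (fst g))) (inv\<^bsub>E\<^esub> g)"
  by (simp add: Ext_conjg_kernel fst_Ext_inv twist_def)

lemma mem_CLd_iff:
  "y \<in> carrier E \<Longrightarrow>
   y \<in> CLd H t \<sigma> \<longleftrightarrow> fst y \<in> H \<and> y = (fst y, t (fst y)) \<otimes>\<^bsub>E\<^esub> (\<one>, \<sigma> (fst y))"
  by (subst Ext_mult_kernel) (auto simp: CLd_def prod_eq_iff)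

lemma conjg_mem_CLd_iff:
  assumes l: "l \<in> carrier P" and g: "g \<in> carrier E"
  shows "conjg E (l, tL l + \<gamma> l) g \<in> CLd H tH \<sigma> \<longleftrightarrow>
         conjg P l (fst g) \<in> H \<and> (\<one>, twist P act \<sigma> g l - \<gamma> l) = zeta P act \<tau> tL tH g l"
proof -
  define lg where "lg = conjg P l (fst g)"
  have lg_closed: "lg \<in> carrier P"
    using l g by (simp add: lg_def)
  have x: "(l, tL l + \<gamma> l) = (l, tL l) \<otimes>\<^bsub>E\<^esub> (\<one>, \<gamma> l)"
    using l by (simp add: Ext_mult_kernel)
  have fst_conjg: "fst (conjg E (l, tL l + \<gamma> l) g) = lg"
    using l g by (simp add: fst_Ext_conjg lg_def)
  have "(\<one>, twist P act \<sigma> g l - \<gamma> l)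
      = conjg E (\<one>, \<sigma> lg) (inv\<^bsub>E\<^esub> g) \<otimes>\<^bsub>E\<^esub> inv\<^bsub>E\<^esub> (\<one>, \<gamma> l)"
    using g by (simp add: kernel_twist_eq_conjg [symmetric] lg_def Ext_inv_kernel Ext_mult_kernel)
  moreover have "zeta P act \<tau> tL tH g l
      = conjg E (inv\<^bsub>E\<^esub> (lg, tH lg)) (inv\<^bsub>E\<^esub> g) \<otimes>\<^bsub>E\<^esub> (l, tL l)"
    by (simp add: zeta_def Let_def lg_def)
  ultimately have "conjg E ((l, tL l) \<otimes>\<^bsub>E\<^esub> (\<one>, \<gamma> l)) g = (lg, tH lg) \<otimes>\<^bsub>E\<^esub> (\<one>, \<sigma> lg)
      \<longleftrightarrow> (\<one>, twist P act \<sigma> g l - \<gamma> l) = zeta P act \<tau> tL tH g l"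
    using l g lg_closed by (simp add: E.conjg_mult_eq_mult_iff)
  then show ?thesis
    using l g by (simp add: mem_CLd_iff fst_conjg flip: x lg_def)
qed

end

theorem theorem3p2:
  fixes P :: "('a,'c) monoid_scheme" and act :: "'b::ab_group_add \<Rightarrow> 'a \<Rightarrow> 'b"
    and \<rho> :: "'a \<Rightarrow> 'a \<Rightarrow> 'b" and p :: nat
    and L H :: "'a set" and tL tH \<gamma> \<sigma> :: "'a \<Rightarrow> 'b" and g :: "'a \<times> 'b"
  assumes "group P" and "finite (carrier P)" and "Factorial_Ring.prime p" and "\<exists>k. card (carrier P) = p ^ k"
    and "right_action P act" and "Z2 P act \<rho>"
    and "L \<in> calL P act \<rho> p" and "H \<in> calL P act \<rho> p"
    and "subgroup (CLd L tL (\<lambda>_. 0)) (Ext P act \<rho>)"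
    and "subgroup (CLd H tH (\<lambda>_. 0)) (Ext P act \<rho>)"
    and "Z1 P act L \<gamma>" and "Z1 P act H \<sigma>"
    and "g \<in> carrier (Ext P act \<rho>)"
  shows "(\<lambda>x. conjg (Ext P act \<rho>) x g) ` CLd L tL \<gamma> \<subseteq> CLd H tH \<sigma>
     \<longleftrightarrow> ((\<lambda>l. conjg P l (fst g)) ` L \<subseteq> H \<and>
          (\<forall>l\<in>L. (\<one>\<^bsub>P\<^esub>, twist P act \<sigma> g l - \<gamma> l) = zeta P act \<rho> tL tH g l))"
proof -
  interpret group_extension P act \<rho>
    using assms by (simp add: group_extension_def group_extension_axioms_def)
  have "L \<subseteq> carrier P"
    using \<open>L \<in> calL P act \<rho> p\<close> by (auto simp: calL_def elem_abelian_def dest: subgroup.subset)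
  then have "\<forall>l\<in>L. conjg E (l, tL l + \<gamma> l) g \<in> CLd H tH \<sigma> \<longleftrightarrow>
      conjg P l (fst g) \<in> H \<and> (\<one>\<^bsub>P\<^esub>, twist P act \<sigma> g l - \<gamma> l) = zeta P act \<rho> tL tH g l"
    using conjg_mem_CLd_iff \<open>g \<in> carrier E\<close> by blast
  then show ?thesis
    by (auto simp: CLd_def)
qed

end
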